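(* Let $P,Q\in\Gamma_n$ with $P\ne Q$, and $0<r\le R$ with $r\le p_i/q_i\le R$ for all $i$. Then $$r\le\frac{\sqrt{2K(P\|Q)}}{\sqrt{\chi^2(Q\|P)}}\le R.$$
   Context: $\Gamma_n=\{P=(p_1,\dots,p_n): p_i>0,\ \sum_i p_i=1\}$, $n\ge2$. $K(P\|Q)=\sum_i p_i\ln(p_i/q_i)$ and $\chi^2(Q\|P)=\sum_i\frac{(p_i-q_i)^2}{p_i}$. *)

theory Defs
  imports Complex_Main
begin

definition Gamma :: "nat \<Rightarrow> (nat \<Rightarrow> real) set" where
  "Gamma n = {P. (\<forall>i<n. P i > 0) \<and> (\<Sum>i<n. P i) = 1}"

definition KL :: "nat \<Rightarrow> (nat \<Rightarrow> real) \<Rightarrow> (nat \<Rightarrow> real) \<Rightarrow> real" where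
  "KL n P Q = (\<Sum>i<n. P i * ln (P i / Q i))"

definition chi2 :: "nat \<Rightarrow> (nat \<Rightarrow> real) \<Rightarrow> (nat \<Rightarrow> real) \<Rightarrow> real" where
  "chi2 n Q P = (\<Sum>i<n. (P i - Q i)^2 / P i)"

end

theory Submission
  imports Defs
begin

text \<open>
  With \<open>f t = t ln t - t + 1\<close> and \<open>t = p/q\<close> one has \<open>K(P\<parallel>Q) = \<Sum> q f(p/q)\<close> (the linear
  terms cancel because \<open>\<Sum>p = \<Sum>q\<close>) and \<open>\<chi>\<^sup>2(Q\<parallel>P) = \<Sum> q (t - 1)\<^sup>2/t\<close>.
  Comparing derivatives shows that \<open>2 f t\<close> lies between \<open>(t - 1)\<^sup>2/t\<close> and \<open>(t - 1)\<^sup>2\<close>,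
  i.e. between \<open>min 1 t\<close> and \<open>max 1 t\<close> times \<open>(t - 1)\<^sup>2/t\<close>. Normalisation forces
  \<open>r \<le> 1 \<le> R\<close>, so summing gives the sharper \<open>r \<chi>\<^sup>2 \<le> 2K \<le> R \<chi>\<^sup>2\<close>, and taking square
  roots only weakens it.
\<close>

definition kl_fun :: "real \<Rightarrow> real" where
  "kl_fun t = t * ln t - t + 1"

lemma one_minus_inverse_square_le_two_ln:
  fixes x :: real
  assumes "0 < x"
  shows "1 - 1 / x\<^sup>2 \<le> 2 * ln x"
proof -
  have "ln (1 / x\<^sup>2) \<le> 1 / x\<^sup>2 - 1"
    using assms by (intro ln_le_minus_one) simp
  then show ?thesis
    using assms by (simp add: ln_div ln_realpow)
qed

lemma two_kl_fun_minus_neyman_mono: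
  assumes "0 < a" "a \<le> b"
  shows "2 * kl_fun a - (a - 1)\<^sup>2 / a \<le> 2 * kl_fun b - (b - 1)\<^sup>2 / b"
proof (rule deriv_nonneg_imp_mono[OF _ _ \<open>a \<le> b\<close>])
  fix x assume "x \<in> {a..b}"
  then have "0 < x" using assms by auto
  show "((\<lambda>t. 2 * kl_fun t - (t - 1)\<^sup>2 / t) has_real_derivative 2 * ln x - 1 + 1 / x\<^sup>2) (at x)"
    using \<open>0 < x\<close> unfolding kl_fun_def
    by (auto intro!: derivative_eq_intros simp: field_simps power2_eq_square)
  show "0 \<le> 2 * ln x - 1 + 1 / x\<^sup>2"
    using one_minus_inverse_square_le_two_ln[OF \<open>0 < x\<close>] by simp
qed

lemma two_kl_fun_minus_pearson_antimono:
  assumes "0 < a" "a \<le> b"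
  shows "2 * kl_fun b - (b - 1)\<^sup>2 \<le> 2 * kl_fun a - (a - 1)\<^sup>2"
proof (rule deriv_nonpos_imp_antimono[OF _ _ \<open>a \<le> b\<close>])
  fix x assume "x \<in> {a..b}"
  then have "0 < x" using assms by auto
  show "((\<lambda>t. 2 * kl_fun t - (t - 1)\<^sup>2) has_real_derivative 2 * (ln x - x + 1)) (at x)"
    using \<open>0 < x\<close> unfolding kl_fun_def
    by (auto intro!: derivative_eq_intros simp: field_simps power2_eq_square)
  show "2 * (ln x - x + 1) \<le> 0"
    using ln_le_minus_one[of x] \<open>0 < x\<close> by simp
qed

lemma two_kl_fun_bounds:
  assumes "0 < t"
  shows "min 1 t * ((t - 1)\<^sup>2 / t) \<le> 2 * kl_fun t"
    and "2 * kl_fun t \<le> max 1 t * ((t - 1)\<^sup>2 / t)"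
proof -
  have "kl_fun 1 = 0" by (simp add: kl_fun_def)
  have pearson: "t * ((t - 1)\<^sup>2 / t) = (t - 1)\<^sup>2" using assms by simp
  consider "1 \<le> t" | "t \<le> 1" by linarith
  then have "min 1 t * ((t - 1)\<^sup>2 / t) \<le> 2 * kl_fun t \<and> 2 * kl_fun t \<le> max 1 t * ((t - 1)\<^sup>2 / t)"
  proof cases
    case 1
    then show ?thesis
      using two_kl_fun_minus_neyman_mono[of 1 t] two_kl_fun_minus_pearson_antimono[of 1 t]
        \<open>kl_fun 1 = 0\<close> pearson by (simp add: min_def max_def)
  next
    case 2
    then show ?thesis
      using two_kl_fun_minus_neyman_mono[of t 1] two_kl_fun_minus_pearson_antimono[of t 1]
        \<open>kl_fun 1 = 0\<close> pearson assms by (simp add: min_def max_def)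
  qed
  then show "min 1 t * ((t - 1)\<^sup>2 / t) \<le> 2 * kl_fun t" "2 * kl_fun t \<le> max 1 t * ((t - 1)\<^sup>2 / t)"
    by auto
qed

lemma two_kl_fun_between:
  assumes "0 < r" "r \<le> 1" "1 \<le> R" "r \<le> t" "t \<le> R"
  shows "r * ((t - 1)\<^sup>2 / t) \<le> 2 * kl_fun t" and "2 * kl_fun t \<le> R * ((t - 1)\<^sup>2 / t)"
proof -
  have "0 < t" "0 \<le> (t - 1)\<^sup>2 / t" using assms by auto
  have "r \<le> min 1 t" "max 1 t \<le> R" using assms by auto
  then show "r * ((t - 1)\<^sup>2 / t) \<le> 2 * kl_fun t" "2 * kl_fun t \<le> R * ((t - 1)\<^sup>2 / t)"
    using two_kl_fun_bounds[OF \<open>0 < t\<close>] mult_right_mono[OF _ \<open>0 \<le> (t - 1)\<^sup>2 / t\<close>]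
    by (meson order_trans)+
qed

lemma perspective_kl_fun:
  assumes "0 < q"
  shows "q * kl_fun (p / q) = p * ln (p / q) - p + q"
  using assms by (simp add: kl_fun_def algebra_simps)

lemma perspective_neyman:
  fixes p q :: real
  assumes "0 < p" "0 < q"
  shows "q * ((p / q - 1)\<^sup>2 / (p / q)) = (p - q)\<^sup>2 / p"
proof -
  have "p / q - 1 = (p - q) / q" using assms by (simp add: field_simps)
  then show ?thesis using assms by (simp add: power2_eq_square)
qed

lemma KL_eq_sum_kl_fun:
  assumes "\<And>i. i < n \<Longrightarrow> 0 < Q i" "(\<Sum>i<n. P i) = (\<Sum>i<n. Q i)"
  shows "KL n P Q = (\<Sum>i<n. Q i * kl_fun (P i / Q i))"
proof -
  have "(\<Sum>i<n. Q i * kl_fun (P i / Q i)) = (\<Sum>i<n. P i * ln (P i / Q i) - P i + Q i)"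
    using assms(1) by (simp add: perspective_kl_fun)
  also have "\<dots> = KL n P Q"
    using assms(2) by (simp add: KL_def sum.distrib sum_subtractf)
  finally show ?thesis by simp
qed

lemma chi2_eq_sum_neyman:
  assumes "\<And>i. i < n \<Longrightarrow> 0 < P i" "\<And>i. i < n \<Longrightarrow> 0 < Q i"
  shows "chi2 n Q P = (\<Sum>i<n. Q i * ((P i / Q i - 1)\<^sup>2 / (P i / Q i)))"
  unfolding chi2_def by (rule sum.cong) (auto simp only: lessThan_iff perspective_neyman assms)

lemma chi2_pos:
  assumes "\<And>i. i < n \<Longrightarrow> 0 < P i" "\<exists>i<n. P i \<noteq> Q i"
  shows "0 < chi2 n Q P"
proof -
  obtain j where "j < n" "P j \<noteq> Q j" using assms(2) by blast
  show ?thesis unfolding chi2_def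
    by (rule sum_pos2[of _ j]) (use \<open>j < n\<close> \<open>P j \<noteq> Q j\<close> assms(1) in \<open>auto intro: divide_nonneg_pos\<close>)
qed

lemma ex_le_of_sum_eq:
  fixes p q :: "'a \<Rightarrow> real"
  assumes "finite A" "A \<noteq> {}" "sum p A = sum q A"
  shows "\<exists>i\<in>A. p i \<le> q i"
proof (rule ccontr)
  assume "\<not> ?thesis"
  then have "sum q A < sum p A"
    using assms(1,2) by (intro sum_strict_mono) auto
  then show False using assms(3) by simp
qed

lemma Gamma_ratio_bounds_straddle_one:
  assumes "0 < n" "P \<in> Gamma n" "Q \<in> Gamma n"
    and "\<And>i. i < n \<Longrightarrow> r \<le> P i / Q i \<and> P i / Q i \<le> R"
  shows "r \<le> 1" and "1 \<le> R"
proof -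
  have Q_pos: "\<And>i. i < n \<Longrightarrow> 0 < Q i" and sums: "sum P {..<n} = sum Q {..<n}"
    using assms(2,3) by (auto simp: Gamma_def)
  have "{..<n} \<noteq> {}" using assms(1) by auto
  obtain i where "i < n" "P i \<le> Q i"
    using ex_le_of_sum_eq[OF _ \<open>{..<n} \<noteq> {}\<close> sums] by auto
  then have "P i / Q i \<le> 1" using Q_pos[of i] by simp
  then show "r \<le> 1" using assms(4)[OF \<open>i < n\<close>] by linarith
  obtain j where "j < n" "Q j \<le> P j"
    using ex_le_of_sum_eq[OF _ \<open>{..<n} \<noteq> {}\<close> sums[symmetric]] by auto
  then have "1 \<le> P j / Q j" using Q_pos[of j] by simp
  then show "1 \<le> R" using assms(4)[OF \<open>j < n\<close>] by linarith
qed

lemma two_KL_between_chi2: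
  assumes "0 < n" "P \<in> Gamma n" "Q \<in> Gamma n" "0 < r"
    and "\<And>i. i < n \<Longrightarrow> r \<le> P i / Q i \<and> P i / Q i \<le> R"
  shows "r * chi2 n Q P \<le> 2 * KL n P Q" and "2 * KL n P Q \<le> R * chi2 n Q P"
proof -
  have P_pos: "\<And>i. i < n \<Longrightarrow> 0 < P i" and Q_pos: "\<And>i. i < n \<Longrightarrow> 0 < Q i"
    and sums: "sum P {..<n} = sum Q {..<n}"
    using assms(2,3) by (auto simp: Gamma_def)
  note straddle = Gamma_ratio_bounds_straddle_one[OF assms(1,2,3,5)]
  note pointwise = two_kl_fun_between[OF \<open>0 < r\<close> straddle, of "P i / Q i" for i]
  have KL: "2 * KL n P Q = (\<Sum>i<n. Q i * (2 * kl_fun (P i / Q i)))"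
    using KL_eq_sum_kl_fun[OF Q_pos sums] by (simp add: sum_distrib_left algebra_simps)
  have chi2: "c * chi2 n Q P = (\<Sum>i<n. Q i * (c * ((P i / Q i - 1)\<^sup>2 / (P i / Q i))))" for c
    using chi2_eq_sum_neyman[OF P_pos Q_pos] by (simp add: sum_distrib_left algebra_simps)
  show "r * chi2 n Q P \<le> 2 * KL n P Q" unfolding KL chi2
    using pointwise(1) assms(5) Q_pos by (intro sum_mono mult_left_mono) (auto intro: less_imp_le)
  show "2 * KL n P Q \<le> R * chi2 n Q P" unfolding KL chi2
    using pointwise(2) assms(5) Q_pos by (intro sum_mono mult_left_mono) (auto intro: less_imp_le)
qed

lemma sqrt_ratio_between:
  assumes "0 < c" "0 < r" "r \<le> 1" "1 \<le> R" "r * c \<le> a" "a \<le> R * c"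
  shows "r \<le> sqrt a / sqrt c" and "sqrt a / sqrt c \<le> R"
proof -
  have "r \<le> a / c" "a / c \<le> R" using assms by (simp_all add: field_simps)
  have "r \<le> sqrt r" using assms(2,3) by (simp add: real_le_rsqrt power2_eq_square mult_le_cancel_left1)
  also have "\<dots> \<le> sqrt (a / c)" using \<open>r \<le> a / c\<close> by simp
  finally show "r \<le> sqrt a / sqrt c" by (simp add: real_sqrt_divide)
  have "sqrt (a / c) \<le> sqrt R" using \<open>a / c \<le> R\<close> by simp
  also have "\<dots> \<le> sqrt (R\<^sup>2)"
    using assms(4) by (intro real_sqrt_le_mono) (simp add: power2_eq_square)
  also have "\<dots> = R" using assms(4) by simp
  finally show "sqrt a / sqrt c \<le> R" by (simp add: real_sqrt_divide)
qed

theorem mainTheorem16: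
  fixes n :: nat and P Q :: "nat \<Rightarrow> real" and r R :: real
  assumes "n \<ge> 2"
    and "P \<in> Gamma n" and "Q \<in> Gamma n"
    and "\<exists>i<n. P i \<noteq> Q i"
    and "0 < r" and "r \<le> R"
    and "\<And>i. i < n \<Longrightarrow> r \<le> P i / Q i \<and> P i / Q i \<le> R"
  shows "r \<le> sqrt (2 * KL n P Q) / sqrt (chi2 n Q P)
       \<and> sqrt (2 * KL n P Q) / sqrt (chi2 n Q P) \<le> R"
proof -
  have "0 < n" using assms(1) by simp
  have "0 < chi2 n Q P"
    using chi2_pos assms(2,4) by (auto simp: Gamma_def)
  show ?thesis
    using sqrt_ratio_between[OF \<open>0 < chi2 n Q P\<close> \<open>0 < r\<close>
        Gamma_ratio_bounds_straddle_one[OF \<open>0 < n\<close> assms(2,3,7)]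
        two_KL_between_chi2[OF \<open>0 < n\<close> assms(2,3,5,7)]]
    by simp
qed

end
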